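(* In a strategic game in the setting described in the context (with equivalent priors), Assumption SAV precludes Assumption FIX; that is, SAV and FIX cannot both hold.
   Context: Setting: there are $n\ge 2$ players and a measurable space $(\Omega,\mathcal{F})$. Each player $i$ has a prior $p_i$ on $\mathcal{F}$, an action set $A_i\subseteq\mathbb{R}$ with $|A_i|>1$, and a finite private information partition $\mathcal{I}_i$ of $\Omega$ into nonempty measurable events. The priors are equivalent (same null sets); strategies are identified when they agree up to null events. A strategy of player $i$ is a $\sigma(\mathcal{I}_i)$-measurable function $s_i:\Omega\to A_i$, and player $i$ is free to apply any such function. For each strategy $s_i$, player $i$ has a unique conjecture $\Psi_i(s_i)$, an $(n-1)$-tuple of strategies of the other players. Assumption SAV (strategic certainty): for every player $i$ and every strategy $s_i$, $\Psi_i(s_i)=s^i$, where $s^i$ is the true tuple of strategies the other players apply in response to $s_i$ (so each strategy of player $i$ determines exactly one response of each other player, and player $i$'s conjecture is correct). Assumption FIX: for every player $i$, $\Psi_i(s_i')=\Psi_i(s_i'')$ for all strategies $s_i',s_i''$ of player $i$ (the other players keep their strategies when player $i$ changes his). *)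

theory Defs
  imports "HOL-Probability.Probability"
begin

text \<open>Players are 0,...,n-1. The state space (Omega, F) is the measure M
(only its space and sigma-algebra matter). Strategies are real-valued
functions on Omega; tuples of strategies of the other players are encoded as
functions nat => ('w => real) whose entry at the own index is irrelevant.\<close>

definition info_partition :: "'w measure \<Rightarrow> 'w set set \<Rightarrow> bool" where
  "info_partition M P \<longleftrightarrow> finite P \<and> P \<subseteq> sets M \<and> {} \<notin> P \<and>
     \<Union>P = space M \<and> disjoint P"

definition strategy :: "'w measure \<Rightarrow> (nat \<Rightarrow> 'w set set) \<Rightarrow> (nat \<Rightarrow> real set)
    \<Rightarrow> nat \<Rightarrow> ('w \<Rightarrow> real) \<Rightarrow> bool" where
  "strategy M I A i s \<longleftrightarrow> s \<in> measurable (sigma (space M) (I i)) borel \<and>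
     (\<forall>x\<in>space M. s x \<in> A i)"

text \<open>Identification of strategies that agree up to a null event
(the priors have the same null sets).\<close>
definition strat_eq :: "nat \<Rightarrow> (nat \<Rightarrow> 'w measure) \<Rightarrow> ('w \<Rightarrow> real) \<Rightarrow> ('w \<Rightarrow> real) \<Rightarrow> bool" where
  "strat_eq n p s t \<longleftrightarrow> (\<forall>j<n. AE x in p j. s x = t x)"

definition tuple_eq :: "nat \<Rightarrow> (nat \<Rightarrow> 'w measure) \<Rightarrow> nat
    \<Rightarrow> (nat \<Rightarrow> 'w \<Rightarrow> real) \<Rightarrow> (nat \<Rightarrow> 'w \<Rightarrow> real) \<Rightarrow> bool" where
  "tuple_eq n p i u v \<longleftrightarrow> (\<forall>j<n. j \<noteq> i \<longrightarrow> strat_eq n p (u j) (v j))"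

text \<open>A system of true responses: R i s is the (unique) tuple of strategies
the other players actually apply when player i applies s. Since this is the
play that actually occurs, it is also the true response to each other
player's strategy in it: the true response to R i s j (from j's viewpoint)
consists of s for player i and R i s k for the remaining players k.\<close>
definition response_system :: "nat \<Rightarrow> 'w measure \<Rightarrow> (nat \<Rightarrow> 'w measure) \<Rightarrow> (nat \<Rightarrow> 'w set set)
    \<Rightarrow> (nat \<Rightarrow> real set) \<Rightarrow> (nat \<Rightarrow> ('w \<Rightarrow> real) \<Rightarrow> nat \<Rightarrow> 'w \<Rightarrow> real) \<Rightarrow> bool" where
  "response_system n M p I A R \<longleftrightarrow>
     (\<forall>i<n. \<forall>s. strategy M I A i s \<longrightarrow>
        (\<forall>j<n. j \<noteq> i \<longrightarrow> strategy M I A j (R i s j))) \<and>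
     (\<forall>i<n. \<forall>s t. strategy M I A i s \<longrightarrow> strategy M I A i t \<longrightarrow> strat_eq n p s t \<longrightarrow>
        tuple_eq n p i (R i s) (R i t)) \<and>
     (\<forall>i<n. \<forall>s. strategy M I A i s \<longrightarrow>
        (\<forall>j<n. j \<noteq> i \<longrightarrow> tuple_eq n p j (R j (R i s j)) ((R i s)(i := s))))"

definition SAV :: "nat \<Rightarrow> 'w measure \<Rightarrow> (nat \<Rightarrow> 'w measure) \<Rightarrow> (nat \<Rightarrow> 'w set set)
    \<Rightarrow> (nat \<Rightarrow> real set) \<Rightarrow> (nat \<Rightarrow> ('w \<Rightarrow> real) \<Rightarrow> nat \<Rightarrow> 'w \<Rightarrow> real) \<Rightarrow> bool" where
  "SAV n M p I A \<Psi> \<longleftrightarrow> (\<exists>R. response_system n M p I A R \<and>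
     (\<forall>i<n. \<forall>s. strategy M I A i s \<longrightarrow> tuple_eq n p i (\<Psi> i s) (R i s)))"

definition FIX :: "nat \<Rightarrow> 'w measure \<Rightarrow> (nat \<Rightarrow> 'w measure) \<Rightarrow> (nat \<Rightarrow> 'w set set)
    \<Rightarrow> (nat \<Rightarrow> real set) \<Rightarrow> (nat \<Rightarrow> ('w \<Rightarrow> real) \<Rightarrow> nat \<Rightarrow> 'w \<Rightarrow> real) \<Rightarrow> bool" where
  "FIX n M p I A \<Psi> \<longleftrightarrow> (\<forall>i<n. \<forall>s s'. strategy M I A i s \<longrightarrow> strategy M I A i s' \<longrightarrow>
     tuple_eq n p i (\<Psi> i s) (\<Psi> i s'))"

end

theory Submission
  imports Defs
begin

text \<open>Let player 0 switch between two constant strategies \<open>a \<noteq> b\<close>, and let \<open>t\<close>, \<open>t'\<close>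
be player 1's true responses. Consistency of the true play says that the true response
to \<open>t\<close> (resp. \<open>t'\<close>) has player 0 playing \<open>a\<close> (resp. \<open>b\<close>). Under SAV these true
responses are player 1's conjectures, and under FIX the conjectures do not depend on
player 1's strategy; so \<open>a = b\<close> almost surely, which is impossible.\<close>

lemma strat_eq_sym: "strat_eq n p s t \<Longrightarrow> strat_eq n p t s"
  unfolding strat_eq_def by (auto elim: AE_mp)

lemma strat_eq_trans: "strat_eq n p s t \<Longrightarrow> strat_eq n p t u \<Longrightarrow> strat_eq n p s u"
  unfolding strat_eq_def
proof (intro allI impI)
  fix j assume "\<forall>j<n. AE x in p j. s x = t x" "\<forall>j<n. AE x in p j. t x = u x" "j < n"
  then have "AE x in p j. s x = t x" "AE x in p j. t x = u x" by blast+
  then show "AE x in p j. s x = u x" by eventually_elim simp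
qed

lemma tuple_eq_trans:
  "tuple_eq n p i u v \<Longrightarrow> tuple_eq n p i v w \<Longrightarrow> tuple_eq n p i u w"
  unfolding tuple_eq_def by (blast intro: strat_eq_trans)

lemma tuple_eq_sym: "tuple_eq n p i u v \<Longrightarrow> tuple_eq n p i v u"
  unfolding tuple_eq_def by (blast intro: strat_eq_sym)

lemma strat_eq_const_iff:
  assumes "0 < n" and "prob_space (p 0)"
  shows "strat_eq n p (\<lambda>_. a) (\<lambda>_. b) \<longleftrightarrow> a = b"
proof
  assume "strat_eq n p (\<lambda>_. a) (\<lambda>_. b)"
  then have "AE x in p 0. a = b"
    using assms(1) unfolding strat_eq_def by blast
  then show "a = b"
    using prob_space.AE_False[OF assms(2)] by (cases "a = b") auto
qed (simp add: strat_eq_def)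

lemma strategy_const: "a \<in> A i \<Longrightarrow> strategy M I A i (\<lambda>_. a)"
  unfolding strategy_def by simp

lemma response_system_strategy:
  "response_system n M p I A R \<Longrightarrow> i < n \<Longrightarrow> j < n \<Longrightarrow> j \<noteq> i \<Longrightarrow>
    strategy M I A i s \<Longrightarrow> strategy M I A j (R i s j)"
  unfolding response_system_def by blast

lemma response_system_response_to_response:
  assumes "response_system n M p I A R" "i < n" "j < n" "j \<noteq> i" "strategy M I A i s"
  shows "strat_eq n p (R j (R i s j) i) s"
proof -
  have "tuple_eq n p j (R j (R i s j)) ((R i s)(i := s))"
    using assms unfolding response_system_def by blast
  then show ?thesis
    using assms(2,4) unfolding tuple_eq_def by (metis fun_upd_same)
qed

lemma SAV_FIX_response_independent:
  assumes "SAV n M p I A \<Psi>" "FIX n M p I A \<Psi>"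
  obtains R where "response_system n M p I A R"
    "\<And>i s s'. i < n \<Longrightarrow> strategy M I A i s \<Longrightarrow> strategy M I A i s' \<Longrightarrow>
       tuple_eq n p i (R i s) (R i s')"
proof -
  obtain R where R: "response_system n M p I A R"
    and sav: "\<And>i s. i < n \<Longrightarrow> strategy M I A i s \<Longrightarrow> tuple_eq n p i (\<Psi> i s) (R i s)"
    using assms(1) unfolding SAV_def by blast
  have "tuple_eq n p i (R i s) (R i s')"
    if "i < n" "strategy M I A i s" "strategy M I A i s'" for i s s'
    using that assms(2) sav[of i s] sav[of i s'] unfolding FIX_def
    by (blast intro: tuple_eq_trans tuple_eq_sym)
  with R show thesis by (rule that)
qed

theorem theorem3:
  fixes n :: nat and M :: "'w measure" and p :: "nat \<Rightarrow> 'w measure"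
    and A :: "nat \<Rightarrow> real set" and I :: "nat \<Rightarrow> 'w set set"
    and \<Psi> :: "nat \<Rightarrow> ('w \<Rightarrow> real) \<Rightarrow> nat \<Rightarrow> 'w \<Rightarrow> real"
  assumes n2: "n \<ge> 2"
    and priors: "\<And>i. i < n \<Longrightarrow> prob_space (p i) \<and> sets (p i) = sets M"
    and equiv: "\<And>i j E. i < n \<Longrightarrow> j < n \<Longrightarrow> E \<in> sets M \<Longrightarrow>
                   (emeasure (p i) E = 0 \<longleftrightarrow> emeasure (p j) E = 0)"
    and actions: "\<And>i. i < n \<Longrightarrow> \<exists>a\<in>A i. \<exists>b\<in>A i. a \<noteq> b"
    and partitions: "\<And>i. i < n \<Longrightarrow> info_partition M (I i)"
    and conj_strat: "\<And>i j s. i < n \<Longrightarrow> j < n \<Longrightarrow> j \<noteq> i \<Longrightarrow> strategy M I A i s \<Longrightarrow>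
                   strategy M I A j (\<Psi> i s j)"
    and conj_wd: "\<And>i s t. i < n \<Longrightarrow> strategy M I A i s \<Longrightarrow> strategy M I A i t \<Longrightarrow>
                   strat_eq n p s t \<Longrightarrow> tuple_eq n p i (\<Psi> i s) (\<Psi> i t)"
  shows "\<not> (SAV n M p I A \<Psi> \<and> FIX n M p I A \<Psi>)"
proof
  assume "SAV n M p I A \<Psi> \<and> FIX n M p I A \<Psi>"
  then obtain R where R: "response_system n M p I A R"
    and indep: "\<And>i s s'. i < n \<Longrightarrow> strategy M I A i s \<Longrightarrow> strategy M I A i s' \<Longrightarrow>
       tuple_eq n p i (R i s) (R i s')"
    using SAV_FIX_response_independent by blast
  have n0: "0 < n" and n1: "1 < n" using n2 by auto
  obtain a b where ab: "a \<in> A 0" "b \<in> A 0" "a \<noteq> b" using actions[OF n0] by blast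
  define t where "t = R 0 (\<lambda>_. a) 1"
  define t' where "t' = R 0 (\<lambda>_. b) 1"
  have "strategy M I A 1 t" "strategy M I A 1 t'"
    unfolding t_def t'_def using R n0 n1 ab
    by (auto intro: response_system_strategy strategy_const)
  then have "strat_eq n p (R 1 t 0) (R 1 t' 0)"
    using indep[OF n1] n0 unfolding tuple_eq_def by simp
  moreover have "strat_eq n p (R 1 t 0) (\<lambda>_. a)" "strat_eq n p (R 1 t' 0) (\<lambda>_. b)"
    unfolding t_def t'_def using R n0 n1 ab
    by (auto intro: response_system_response_to_response strategy_const)
  ultimately have "strat_eq n p (\<lambda>_. a) (\<lambda>_. b)"
    by (blast intro: strat_eq_trans strat_eq_sym)
  with ab(3) show False
    using strat_eq_const_iff[OF n0] priors[OF n0] by blast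
qed

end
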